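(* Let $\mathcal{F}$ be the class of planar graphs of maximum degree at most $4$, and let $G \in \mathcal{F}$ be a graph with $\chi_2(G) > 12$ that minimizes the pair $(|V(G)|, |E(G)|)$ (lexicographically) among all graphs of $\mathcal{F}$ with $\chi_2 > 12$. Then $G$ is $2$-connected.
   Context: All graphs are finite, without loops or parallel edges. A distance-$2$ coloring of a graph is an assignment of colors to its vertices such that any two distinct vertices at distance at most $2$ receive different colors; $\chi_2(G)$ is the minimum number of colors in a distance-$2$ coloring of $G$. *)

theory Defs
  imports "HOL-Analysis.Analysis"
begin

definition simple_graph :: "'v set \<Rightarrow> 'v set set \<Rightarrow> bool" where
  "simple_graph V E \<longleftrightarrow> finite V \<and> (\<forall>e\<in>E. \<exists>u v. e = {u, v} \<and> u \<noteq> v \<and> u \<in> V \<and> v \<in> V)"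

definition adj :: "'v set set \<Rightarrow> 'v \<Rightarrow> 'v \<Rightarrow> bool" where
  "adj E u v \<longleftrightarrow> {u, v} \<in> E \<and> u \<noteq> v"

definition degree :: "'v set set \<Rightarrow> 'v \<Rightarrow> nat" where
  "degree E v = card {e \<in> E. v \<in> e}"

definition max_degree_le :: "'v set \<Rightarrow> 'v set set \<Rightarrow> nat \<Rightarrow> bool" where
  "max_degree_le V E d \<longleftrightarrow> (\<forall>v\<in>V. degree E v \<le> d)"

definition dist_le2 :: "'v set \<Rightarrow> 'v set set \<Rightarrow> 'v \<Rightarrow> 'v \<Rightarrow> bool" where
  "dist_le2 V E u v \<longleftrightarrow> adj E u v \<or> (\<exists>w\<in>V. adj E u w \<and> adj E w v)"

definition dist2_coloring :: "'v set \<Rightarrow> 'v set set \<Rightarrow> nat \<Rightarrow> ('v \<Rightarrow> nat) \<Rightarrow> bool" where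
  "dist2_coloring V E k c \<longleftrightarrow> (\<forall>v\<in>V. c v < k) \<and>
     (\<forall>u\<in>V. \<forall>v\<in>V. u \<noteq> v \<and> dist_le2 V E u v \<longrightarrow> c u \<noteq> c v)"

definition chi2 :: "'v set \<Rightarrow> 'v set set \<Rightarrow> nat" where
  "chi2 V E = (LEAST k. \<exists>c. dist2_coloring V E k c)"

definition planar :: "'v set \<Rightarrow> 'v set set \<Rightarrow> bool" where
  "planar V E \<longleftrightarrow> (\<exists>(p :: 'v \<Rightarrow> complex) (\<gamma> :: 'v set \<Rightarrow> real \<Rightarrow> complex).
     inj_on p V \<and>
     (\<forall>e\<in>E. arc (\<gamma> e) \<and> {pathstart (\<gamma> e), pathfinish (\<gamma> e)} = p ` e \<and>
             path_image (\<gamma> e) \<inter> p ` V = p ` e) \<and>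
     (\<forall>e\<in>E. \<forall>e'\<in>E. e \<noteq> e' \<longrightarrow> path_image (\<gamma> e) \<inter> path_image (\<gamma> e') \<subseteq> p ` (e \<inter> e')))"

definition connected_graph :: "'v set \<Rightarrow> 'v set set \<Rightarrow> bool" where
  "connected_graph V E \<longleftrightarrow> V \<noteq> {} \<and>
     (\<forall>u\<in>V. \<forall>v\<in>V. (\<lambda>x y. x \<in> V \<and> y \<in> V \<and> adj E x y)\<^sup>*\<^sup>* u v)"

definition del_vertex_edges :: "'v set set \<Rightarrow> 'v \<Rightarrow> 'v set set" where
  "del_vertex_edges E x = {e \<in> E. x \<notin> e}"

definition two_connected :: "'v set \<Rightarrow> 'v set set \<Rightarrow> bool" where
  "two_connected V E \<longleftrightarrow> card V \<ge> 3 \<and> connected_graph V E \<and>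
     (\<forall>x\<in>V. connected_graph (V - {x}) (del_vertex_edges E x))"

definition in_F :: "'v set \<Rightarrow> 'v set set \<Rightarrow> bool" where
  "in_F V E \<longleftrightarrow> simple_graph V E \<and> planar V E \<and> max_degree_le V E 4"

end

theory Submission
  imports Defs
begin

text \<open>If G were not 2-connected, it would split at a vertex x into two proper induced
  subgraphs G[A] and G[B] with A \<inter> B = {x} and no edges between A - {x} and B - {x} (a
  disconnected graph on at least three vertices already splits at a vertex whose deletion
  keeps two vertices apart). By minimality both sides have distance-2 colourings with 12
  colours. Two vertices on different sides at distance at most 2 are both neighbours of x.
  As x has at most 4 neighbours, the colours of the colouring of G[B] can be permuted so
  that x keeps its colour and the B-neighbours of x avoid the colours of x and of its
  A-neighbours; the two colourings then combine into a 12-colouring of G.\<close>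

definition induced_edges :: "'v set set \<Rightarrow> 'v set \<Rightarrow> 'v set set" where
  "induced_edges E A = {e \<in> E. e \<subseteq> A}"

lemma simple_graph_finite_edges:
  assumes "simple_graph V E"
  shows "finite E"
proof (rule finite_subset)
  show "E \<subseteq> Pow V"
    using assms unfolding simple_graph_def by auto
  show "finite (Pow V)"
    using assms unfolding simple_graph_def by simp
qed

lemma adj_sym: "adj E u v \<Longrightarrow> adj E v u"
  unfolding adj_def by (auto simp: insert_commute)

lemma dist_le2_sym: "dist_le2 V E u v \<Longrightarrow> dist_le2 V E v u"
  unfolding dist_le2_def by (auto dest: adj_sym)

lemma card_neighbours_le_degree:
  assumes "finite E"
  shows "card {v. adj E x v} \<le> degree E x"
  unfolding degree_def
proof (rule card_inj_on_le[where f = "\<lambda>v. {x, v}"])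
  show "inj_on (\<lambda>v. {x, v}) {v. adj E x v}"
    by (auto simp: inj_on_def adj_def doubleton_eq_iff)
  show "(\<lambda>v. {x, v}) ` {v. adj E x v} \<subseteq> {e \<in> E. x \<in> e}"
    by (auto simp: adj_def)
qed (use assms in auto)

lemma finite_neighbours:
  assumes "finite E"
  shows "finite {v. adj E x v}"
proof (rule finite_imageD)
  have "(\<lambda>v. {x, v}) ` {v. adj E x v} \<subseteq> E"
    by (auto simp: adj_def)
  then show "finite ((\<lambda>v. {x, v}) ` {v. adj E x v})"
    using assms by (rule finite_subset)
  show "inj_on (\<lambda>v. {x, v}) {v. adj E x v}"
    by (auto simp: inj_on_def adj_def doubleton_eq_iff)
qed

lemma dist2_coloring_adj:
  assumes "dist2_coloring V E k c" "u \<in> V" "v \<in> V" "adj E u v"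
  shows "c u \<noteq> c v"
  using assms unfolding dist2_coloring_def dist_le2_def adj_def by blast

lemma chi2_le: "dist2_coloring V E k c \<Longrightarrow> chi2 V E \<le> k"
  unfolding chi2_def by (rule Least_le) blast

lemma dist2_coloring_card: "finite V \<Longrightarrow> \<exists>c. dist2_coloring V E (card V) c"
proof -
  assume "finite V"
  then obtain h where "bij_betw h V {0..<card V}"
    using ex_bij_betw_finite_nat by blast
  then have "dist2_coloring V E (card V) h"
    unfolding dist2_coloring_def bij_betw_def inj_on_def by auto
  then show ?thesis by blast
qed

lemma dist2_colorable_iff_chi2_le:
  assumes "finite V"
  shows "(\<exists>c. dist2_coloring V E k c) \<longleftrightarrow> chi2 V E \<le> k"
proof
  assume "chi2 V E \<le> k"
  have "\<exists>k c. dist2_coloring V E k c"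
    using dist2_coloring_card[OF assms] by blast
  then have "\<exists>c. dist2_coloring V E (chi2 V E) c"
    unfolding chi2_def by (rule LeastI_ex)
  then obtain c where "dist2_coloring V E (chi2 V E) c" ..
  then have "dist2_coloring V E k c"
    using \<open>chi2 V E \<le> k\<close> unfolding dist2_coloring_def by auto
  then show "\<exists>c. dist2_coloring V E k c" by blast
qed (auto intro: chi2_le)

lemma simple_graph_subgraph:
  assumes "simple_graph V E" "A \<subseteq> V" "E' \<subseteq> E" "\<forall>e\<in>E'. e \<subseteq> A"
  shows "simple_graph A E'"
proof -
  have "finite V"
    using assms(1) unfolding simple_graph_def by simp
  then have "finite A"
    using finite_subset[OF assms(2)] by simp
  moreover have "\<exists>u v. e = {u, v} \<and> u \<noteq> v \<and> u \<in> A \<and> v \<in> A" if "e \<in> E'" for e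
  proof -
    have "e \<in> E" "e \<subseteq> A"
      using that assms(3,4) by auto
    moreover obtain u v where "e = {u, v}" "u \<noteq> v"
      using assms(1) \<open>e \<in> E\<close> unfolding simple_graph_def by blast
    ultimately show ?thesis
      by auto
  qed
  ultimately show ?thesis
    unfolding simple_graph_def by blast
qed

lemma planar_subgraph:
  assumes "planar V E" "A \<subseteq> V" "E' \<subseteq> E" "\<forall>e\<in>E'. e \<subseteq> A"
  shows "planar A E'"
proof -
  obtain p :: "'a \<Rightarrow> complex" and \<gamma> where
    inj: "inj_on p V" and
    arcs: "\<forall>e\<in>E. arc (\<gamma> e) \<and> {pathstart (\<gamma> e), pathfinish (\<gamma> e)} = p ` e \<and>
             path_image (\<gamma> e) \<inter> p ` V = p ` e" and
    crossings: "\<forall>e\<in>E. \<forall>e'\<in>E. e \<noteq> e' \<longrightarrow>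
             path_image (\<gamma> e) \<inter> path_image (\<gamma> e') \<subseteq> p ` (e \<inter> e')"
    using assms(1) unfolding planar_def by blast
  have "\<forall>e\<in>E'. arc (\<gamma> e) \<and> {pathstart (\<gamma> e), pathfinish (\<gamma> e)} = p ` e \<and>
          path_image (\<gamma> e) \<inter> p ` A = p ` e"
  proof
    fix e assume "e \<in> E'"
    then have e: "e \<in> E" "e \<subseteq> A"
      using assms(3,4) by auto
    have "path_image (\<gamma> e) \<inter> p ` A = path_image (\<gamma> e) \<inter> p ` V \<inter> p ` A"
      using assms(2) by blast
    also have "\<dots> = p ` e"
      using arcs e by blast
    finally show "arc (\<gamma> e) \<and> {pathstart (\<gamma> e), pathfinish (\<gamma> e)} = p ` e \<and>
          path_image (\<gamma> e) \<inter> p ` A = p ` e"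
      using arcs e(1) by blast
  qed
  moreover have "\<forall>e\<in>E'. \<forall>e'\<in>E'. e \<noteq> e' \<longrightarrow>
      path_image (\<gamma> e) \<inter> path_image (\<gamma> e') \<subseteq> p ` (e \<inter> e')"
    using crossings assms(3) by blast
  moreover have "inj_on p A"
    using inj assms(2) by (rule inj_on_subset)
  ultimately show ?thesis
    unfolding planar_def by (intro exI[of _ p] exI[of _ \<gamma>] conjI)
qed

lemma max_degree_le_subgraph:
  assumes "max_degree_le V E d" "finite E" "A \<subseteq> V" "E' \<subseteq> E"
  shows "max_degree_le A E' d"
  unfolding max_degree_le_def
proof
  fix v assume "v \<in> A"
  have "degree E' v \<le> degree E v"
    unfolding degree_def by (rule card_mono) (use assms in auto)
  also have "\<dots> \<le> d"
    using assms \<open>v \<in> A\<close> unfolding max_degree_le_def by auto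
  finally show "degree E' v \<le> d" .
qed

lemma in_F_induced:
  assumes "in_F V E" "A \<subseteq> V"
  shows "in_F A (induced_edges E A)"
proof -
  have G: "simple_graph V E" "planar V E" "max_degree_le V E 4"
    using assms(1) unfolding in_F_def by auto
  have sub: "induced_edges E A \<subseteq> E" "\<forall>e\<in>induced_edges E A. e \<subseteq> A"
    unfolding induced_edges_def by auto
  show ?thesis
    unfolding in_F_def
    using simple_graph_subgraph[OF G(1) assms(2) sub] planar_subgraph[OF G(2) assms(2) sub]
      max_degree_le_subgraph[OF G(3) simple_graph_finite_edges[OF G(1)] assms(2) sub(1)]
    by blast
qed

lemma inj_on_extend_to_self_map:
  assumes "finite K" "S \<subseteq> K" "inj_on g S" "g ` S \<subseteq> K"
  obtains \<pi> where "inj_on \<pi> K" "\<pi> ` K \<subseteq> K" "\<And>s. s \<in> S \<Longrightarrow> \<pi> s = g s"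
proof -
  have "finite S"
    using assms(1,2) by (rule finite_subset[rotated])
  then have "card (K - S) = card (K - g ` S)"
    using assms by (simp add: card_Diff_subset card_image)
  moreover have "finite (K - S)" "finite (K - g ` S)"
    using assms(1) by simp_all
  ultimately obtain h where h: "bij_betw h (K - S) (K - g ` S)"
    using finite_same_card_bij by blast
  define \<pi> where "\<pi> z = (if z \<in> S then g z else h z)" for z
  have "inj_on \<pi> S"
    using assms(3) by (simp add: \<pi>_def inj_on_def)
  moreover have "inj_on \<pi> (K - S)"
    using h by (simp add: \<pi>_def inj_on_def bij_betw_def)
  moreover have "\<pi> ` (K - S) \<inter> \<pi> ` S = {}"
    using h by (auto simp: \<pi>_def bij_betw_def)
  ultimately have "inj_on \<pi> (S \<union> (K - S))"
    unfolding inj_on_Un by blast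
  then have "inj_on \<pi> K"
    using assms(2) by (simp add: Un_absorb1)
  moreover have "\<pi> ` K \<subseteq> K"
    using assms(4) h by (auto simp: \<pi>_def bij_betw_def)
  moreover have "\<pi> s = g s" if "s \<in> S" for s
    using that by (simp add: \<pi>_def)
  ultimately show ?thesis
    by (rule that)
qed

lemma inj_self_map_sending_point_avoiding:
  assumes "finite K" "a \<in> K" "b \<in> K" "S \<subseteq> K" "a \<notin> S" "b \<in> F" "finite F"
    and "card S + card F \<le> card K"
  obtains \<pi> where "inj_on \<pi> K" "\<pi> ` K \<subseteq> K" "\<pi> a = b" "\<pi> ` S \<inter> F = {}"
proof -
  have "finite S"
    using assms(1,4) by (rule finite_subset[rotated])
  have "card S \<le> card (K - F)"
    using diff_card_le_card_Diff[OF assms(7), of K] assms(8) by linarith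
  with \<open>finite S\<close> obtain g where g: "g ` S \<subseteq> K - F" "inj_on g S"
    using card_le_inj assms(1) by blast
  have inj: "inj_on (g(a := b)) (insert a S)"
    using g assms(5,6) by (auto simp: inj_on_def)
  have img: "g(a := b) ` insert a S \<subseteq> K"
    using g assms(3,5) by auto
  have "insert a S \<subseteq> K"
    using assms(2,4) by blast
  then obtain \<pi> where \<pi>: "inj_on \<pi> K" "\<pi> ` K \<subseteq> K" "\<And>s. s \<in> insert a S \<Longrightarrow> \<pi> s = (g(a := b)) s"
    using inj_on_extend_to_self_map[OF assms(1) _ inj img] by blast
  show ?thesis
  proof (rule that[OF \<pi>(1,2)])
    show "\<pi> a = b"
      using \<pi>(3) by simp
    show "\<pi> ` S \<inter> F = {}"
      using \<pi>(3) g(1) assms(5) by auto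
  qed
qed

lemma proper_induced_subgraph_dist2_colorable:
  fixes V :: "'v set"
  assumes "in_F V E" "finite V" "A \<subset> V"
    and minimal: "\<And>(V' :: 'v set) E'. in_F V' E' \<Longrightarrow> chi2 V' E' > k \<Longrightarrow>
      card V < card V' \<or> (card V = card V' \<and> card E \<le> card E')"
  shows "\<exists>c. dist2_coloring A (induced_edges E A) k c"
proof -
  have "finite A" "card A < card V"
    using assms(2,3) finite_subset psubset_card_mono by auto
  have "\<not> k < chi2 A (induced_edges E A)"
  proof
    assume "k < chi2 A (induced_edges E A)"
    then have "card V < card A \<or> (card V = card A \<and> card E \<le> card (induced_edges E A))"
      using assms(3) by (intro minimal in_F_induced[OF assms(1)]) auto
    then show False
      using \<open>card A < card V\<close> by linarith
  qed
  then show ?thesis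
    using dist2_colorable_iff_chi2_le[OF \<open>finite A\<close>] by simp
qed

definition cut_vertex_split :: "'v set \<Rightarrow> 'v set set \<Rightarrow> 'v \<Rightarrow> 'v set \<Rightarrow> 'v set \<Rightarrow> bool" where
  "cut_vertex_split V E x A B \<longleftrightarrow>
     V = A \<union> B \<and> A \<inter> B = {x} \<and> (\<forall>u\<in>A - {x}. \<forall>v\<in>B - {x}. \<not> adj E u v)"

lemma cut_vertex_split_sym: "cut_vertex_split V E x A B \<Longrightarrow> cut_vertex_split V E x B A"
  unfolding cut_vertex_split_def by (blast dest: adj_sym)

lemma cut_vertex_split_dist_le2:
  assumes split: "cut_vertex_split V E x A B"
    and "u \<in> A" "v \<in> A" "u \<noteq> v" "dist_le2 V E u v"
  shows "dist_le2 A (induced_edges E A) u v"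
proof -
  have induced: "adj (induced_edges E A) p q" if "adj E p q" "p \<in> A" "q \<in> A" for p q
    using that unfolding adj_def induced_edges_def by auto
  have no_exit: "\<not> adj E p q" if "p \<in> A - {x}" "q \<in> V - A" for p q
    using split that unfolding cut_vertex_split_def by blast
  show ?thesis
  proof (cases "adj E u v")
    case True
    then show ?thesis
      using induced assms unfolding dist_le2_def by blast
  next
    case False
    then obtain w where w: "w \<in> V" "adj E u w" "adj E w v"
      using assms unfolding dist_le2_def by blast
    \<comment> \<open>A common neighbour outside A would be adjacent to u or v, one of which differs from x.\<close>
    have "w \<in> A"
    proof (rule ccontr)
      assume "w \<notin> A"
      then have "u = x \<and> v = x"
        using no_exit[of u w] no_exit[of v w] adj_sym[OF w(3)] w(1,2) assms(2,3) by blast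
      then show False
        using \<open>u \<noteq> v\<close> by blast
    qed
    then show ?thesis
      using induced w assms unfolding dist_le2_def by blast
  qed
qed

lemma cut_vertex_split_cross_dist_le2:
  assumes split: "cut_vertex_split V E x A B"
    and "u \<in> A - {x}" "v \<in> B - {x}" "dist_le2 V E u v"
  shows "adj E x u \<and> adj E x v"
proof -
  have no_cross: "\<not> adj E p q" "\<not> adj E q p" if "p \<in> A - {x}" "q \<in> B - {x}" for p q
    using split that unfolding cut_vertex_split_def by (blast dest: adj_sym)+
  obtain w where w: "w \<in> V" "adj E u w" "adj E w v"
    using assms no_cross unfolding dist_le2_def by blast
  have "w = x"
    using split w no_cross[of u w] no_cross[of w v] assms(2,3) unfolding cut_vertex_split_def
    by blast
  then show ?thesis
    using w by (blast dest: adj_sym)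
qed

lemma cut_vertex_split_coloring_distinct:
  assumes "cut_vertex_split V E x A B" "dist2_coloring A (induced_edges E A) k c"
    and "u \<in> A" "v \<in> A" "u \<noteq> v" "dist_le2 V E u v"
  shows "c u \<noteq> c v"
  using assms(2) cut_vertex_split_dist_le2[OF assms(1,3-6)] assms(3-5)
  unfolding dist2_coloring_def by blast

lemma dist2_coloring_compose:
  assumes "dist2_coloring V E k c" "inj_on \<pi> {..<k}" "\<pi> ` {..<k} \<subseteq> {..<k}"
  shows "dist2_coloring V E k (\<pi> \<circ> c)"
proof -
  have range: "c v \<in> {..<k}" if "v \<in> V" for v
    using assms(1) that unfolding dist2_coloring_def by simp
  show ?thesis
    unfolding dist2_coloring_def
  proof (intro conjI ballI impI)
    fix v assume "v \<in> V"
    then show "(\<pi> \<circ> c) v < k"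
      using range assms(3) by auto
  next
    fix u v assume uv: "u \<in> V" "v \<in> V" "u \<noteq> v \<and> dist_le2 V E u v"
    then have "c u \<noteq> c v"
      using assms(1) unfolding dist2_coloring_def by blast
    then show "(\<pi> \<circ> c) u \<noteq> (\<pi> \<circ> c) v"
      using inj_on_eq_iff[OF assms(2)] range uv(1,2) by simp
  qed
qed

lemma dist2_coloring_combine:
  assumes split: "cut_vertex_split V E x A B"
    and c1: "dist2_coloring A (induced_edges E A) k c1"
    and c2: "dist2_coloring B (induced_edges E B) k c2"
    and agree: "c1 x = c2 x"
    and neighbours: "\<And>u v. u \<in> A - {x} \<Longrightarrow> v \<in> B - {x} \<Longrightarrow> adj E x u \<Longrightarrow> adj E x v \<Longrightarrow> c1 u \<noteq> c2 v"
  shows "dist2_coloring V E k (\<lambda>v. if v \<in> A then c1 v else c2 v)"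
    (is "dist2_coloring V E k ?c")
proof -
  have AB: "V = A \<union> B" "A \<inter> B = {x}"
    using split unfolding cut_vertex_split_def by auto
  have cB: "?c v = c2 v" if "v \<in> B" for v
    using that AB agree by auto
  have cross: "?c u \<noteq> ?c v" if "u \<in> A - {x}" "v \<in> B - {x}" "dist_le2 V E u v" for u v
  proof -
    have "adj E x u" "adj E x v"
      using cut_vertex_split_cross_dist_le2[OF split that] by auto
    then have "c1 u \<noteq> c2 v"
      using neighbours that(1,2) by blast
    then show ?thesis
      using cB that(1,2) by simp
  qed
  show ?thesis
    unfolding dist2_coloring_def
  proof (intro conjI ballI impI)
    fix v assume "v \<in> V"
    then show "?c v < k"
      using c1 c2 AB unfolding dist2_coloring_def by auto
  next
    fix u v assume uv: "u \<in> V" "v \<in> V" "u \<noteq> v \<and> dist_le2 V E u v"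
    consider "u \<in> A" "v \<in> A" | "u \<in> B" "v \<in> B" | "u \<in> A - {x}" "v \<in> B - {x}"
      | "v \<in> A - {x}" "u \<in> B - {x}"
      using uv(1,2) AB by blast
    then show "?c u \<noteq> ?c v"
    proof cases
      case 1
      then show ?thesis
        using cut_vertex_split_coloring_distinct[OF split c1 1] uv(3) by simp
    next
      case 2
      then show ?thesis
        using cut_vertex_split_coloring_distinct[OF cut_vertex_split_sym[OF split] c2 2] uv(3) cB
        by simp
    next
      case 3
      then show ?thesis
        using cross uv(3) by blast
    next
      case 4
      then show ?thesis
        using cross[OF 4 dist_le2_sym] uv(3) by auto
    qed
  qed
qed

lemma cut_vertex_split_card_neighbours:
  assumes "finite E" "cut_vertex_split V E x A B"
  shows "card {v \<in> A - {x}. adj E x v} + card {v \<in> B - {x}. adj E x v} \<le> degree E x"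
proof -
  let ?N1 = "{v \<in> A - {x}. adj E x v}" and ?N2 = "{v \<in> B - {x}. adj E x v}"
  have "finite ?N1" "finite ?N2"
    using finite_neighbours[OF assms(1), of x] by (auto intro: finite_subset[rotated])
  then have "card ?N1 + card ?N2 = card (?N1 \<union> ?N2)"
    using assms(2) unfolding cut_vertex_split_def by (intro card_Un_disjoint[symmetric]) auto
  also have "\<dots> \<le> card {v. adj E x v}"
    by (rule card_mono[OF finite_neighbours[OF assms(1)]]) auto
  also have "\<dots> \<le> degree E x"
    using assms(1) by (rule card_neighbours_le_degree)
  finally show ?thesis .
qed

lemma cut_vertex_colour_permutation:
  assumes "finite E" and split: "cut_vertex_split V E x A B" and deg: "degree E x < k"
    and c1: "dist2_coloring A (induced_edges E A) k c1"
    and c2: "dist2_coloring B (induced_edges E B) k c2"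
  obtains \<pi> where "inj_on \<pi> {..<k}" "\<pi> ` {..<k} \<subseteq> {..<k}" "\<pi> (c2 x) = c1 x"
    "\<And>u v. u \<in> A - {x} \<Longrightarrow> v \<in> B - {x} \<Longrightarrow> adj E x u \<Longrightarrow> adj E x v \<Longrightarrow> c1 u \<noteq> \<pi> (c2 v)"
proof -
  define N1 where "N1 = {v \<in> A - {x}. adj E x v}"
  define N2 where "N2 = {v \<in> B - {x}. adj E x v}"
  have x: "x \<in> A" "x \<in> B"
    using split unfolding cut_vertex_split_def by auto
  have fin: "finite N1" "finite N2"
    using finite_neighbours[OF \<open>finite E\<close>, of x] unfolding N1_def N2_def
    by (auto intro: finite_subset[rotated])
  have N12: "card N1 + card N2 < k"
    using cut_vertex_split_card_neighbours[OF \<open>finite E\<close> split] deg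
    unfolding N1_def N2_def by linarith
  define forbidden where "forbidden = insert (c1 x) (c1 ` N1)"
  have card_le: "card (c2 ` N2) + card forbidden \<le> card {..<k}"
    using card_image_le[OF fin(2), of c2] card_image_le[OF fin(1), of c1] fin(1) N12
    unfolding forbidden_def by (simp add: card_insert_if)
  have fresh: "c2 x \<notin> c2 ` N2"
  proof
    assume "c2 x \<in> c2 ` N2"
    then obtain v where v: "v \<in> B" "v \<noteq> x" "adj E x v" "c2 v = c2 x"
      unfolding N2_def by auto
    then have "adj (induced_edges E B) x v"
      using x unfolding adj_def induced_edges_def by auto
    then show False
      using dist2_coloring_adj[OF c2 x(2) v(1)] v(4) by simp
  qed
  have colours: "c2 x \<in> {..<k}" "c1 x \<in> {..<k}" "c2 ` N2 \<subseteq> {..<k}"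
    using c1 c2 x unfolding N2_def dist2_coloring_def by auto
  have "c1 x \<in> forbidden" "finite forbidden"
    unfolding forbidden_def using fin(1) by simp_all
  then obtain \<pi> where \<pi>: "inj_on \<pi> {..<k}" "\<pi> ` {..<k} \<subseteq> {..<k}" "\<pi> (c2 x) = c1 x"
      "\<pi> ` c2 ` N2 \<inter> forbidden = {}"
    using inj_self_map_sending_point_avoiding[OF finite_lessThan colours fresh _ _ card_le] by blast
  have "c1 u \<noteq> \<pi> (c2 v)"
    if "u \<in> A - {x}" "v \<in> B - {x}" "adj E x u" "adj E x v" for u v
  proof
    assume "c1 u = \<pi> (c2 v)"
    moreover have "c1 u \<in> forbidden" "\<pi> (c2 v) \<in> \<pi> ` c2 ` N2"
      using that unfolding N1_def N2_def forbidden_def by auto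
    ultimately have "\<pi> (c2 v) \<in> \<pi> ` c2 ` N2 \<inter> forbidden"
      by simp
    then show False
      using \<pi>(4) by simp
  qed
  with \<pi>(1-3) show ?thesis
    by (rule that)
qed

lemma dist2_coloring_glue:
  assumes "finite E" and split: "cut_vertex_split V E x A B" and deg: "degree E x < k"
    and c1: "dist2_coloring A (induced_edges E A) k c1"
    and c2: "dist2_coloring B (induced_edges E B) k c2"
  shows "\<exists>c. dist2_coloring V E k c"
proof -
  obtain \<pi> where \<pi>: "inj_on \<pi> {..<k}" "\<pi> ` {..<k} \<subseteq> {..<k}" "\<pi> (c2 x) = c1 x"
    and neighbours: "\<And>u v. u \<in> A - {x} \<Longrightarrow> v \<in> B - {x} \<Longrightarrow> adj E x u \<Longrightarrow> adj E x v \<Longrightarrow>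
      c1 u \<noteq> \<pi> (c2 v)"
    using cut_vertex_colour_permutation[OF assms] by blast
  have "dist2_coloring V E k (\<lambda>v. if v \<in> A then c1 v else (\<pi> \<circ> c2) v)"
    by (rule dist2_coloring_combine[OF split c1 dist2_coloring_compose[OF c2 \<pi>(1,2)]])
      (use \<pi>(3) neighbours in auto)
  then show ?thesis
    by blast
qed

lemma unreachable_component:
  assumes "u \<in> W" "\<not> (\<lambda>a b. a \<in> W \<and> b \<in> W \<and> adj E a b)\<^sup>*\<^sup>* u v"
  obtains C where "u \<in> C" "C \<subseteq> W" "v \<notin> C" "\<And>w w'. w \<in> C \<Longrightarrow> w' \<in> W - C \<Longrightarrow> \<not> adj E w w'"
proof
  let ?R = "\<lambda>a b. a \<in> W \<and> b \<in> W \<and> adj E a b"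
  show "u \<in> {w. ?R\<^sup>*\<^sup>* u w}" "v \<notin> {w. ?R\<^sup>*\<^sup>* u w}"
    using assms(2) by auto
  show "{w. ?R\<^sup>*\<^sup>* u w} \<subseteq> W"
  proof
    fix w assume "w \<in> {w. ?R\<^sup>*\<^sup>* u w}"
    then have "?R\<^sup>*\<^sup>* u w"
      by simp
    then show "w \<in> W"
      using assms(1) by (induction rule: rtranclp_induct) auto
  qed
  then show "\<not> adj E w w'" if "w \<in> {w. ?R\<^sup>*\<^sup>* u w}" "w' \<in> W - {w. ?R\<^sup>*\<^sup>* u w}" for w w'
    using that by (auto intro: rtranclp.rtrancl_into_rtrancl)
qed

lemma cut_vertex_split_if_cut_vertex:
  assumes "x \<in> V" "V - {x} \<noteq> {}" "\<not> connected_graph (V - {x}) (del_vertex_edges E x)"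
  obtains A B where "cut_vertex_split V E x A B" "A \<subset> V" "B \<subset> V"
proof -
  have adj_del: "adj (del_vertex_edges E x) p q \<longleftrightarrow> adj E p q" if "p \<noteq> x" "q \<noteq> x" for p q
    using that unfolding adj_def del_vertex_edges_def by auto
  obtain u v where uv: "u \<in> V - {x}" "v \<in> V - {x}"
      "\<not> (\<lambda>a b. a \<in> V - {x} \<and> b \<in> V - {x} \<and> adj (del_vertex_edges E x) a b)\<^sup>*\<^sup>* u v"
    using assms(2,3) unfolding connected_graph_def by blast
  obtain C where C: "u \<in> C" "C \<subseteq> V - {x}" "v \<notin> C"
    and closed: "\<And>w w'. w \<in> C \<Longrightarrow> w' \<in> V - {x} - C \<Longrightarrow> \<not> adj (del_vertex_edges E x) w w'"
    using unreachable_component[OF uv(1,3)] by blast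
  have separated: "\<not> adj E w w'" if "w \<in> C" "w' \<in> V - {x} - C" for w w'
    using closed[OF that] adj_del that C(2) by blast
  show ?thesis
  proof
    show "cut_vertex_split V E x (insert x C) (insert x (V - {x} - C))"
      unfolding cut_vertex_split_def using C separated assms(1) by auto
    show "insert x C \<subset> V" "insert x (V - {x} - C) \<subset> V"
      using C uv assms(1) by auto
  qed
qed

lemma not_connected_graph_delete_vertex:
  assumes "card V \<ge> 3" "\<not> connected_graph V E"
  obtains x where "x \<in> V" "\<not> connected_graph (V - {x}) (del_vertex_edges E x)"
proof -
  let ?R = "\<lambda>a b. a \<in> V \<and> b \<in> V \<and> adj E a b"
  have "V \<noteq> {}"
    using assms(1) by auto
  then obtain u v where uv: "u \<in> V" "v \<in> V" "\<not> ?R\<^sup>*\<^sup>* u v"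
    using assms(2) unfolding connected_graph_def by blast
  have "\<not> V \<subseteq> {u, v}"
  proof
    assume "V \<subseteq> {u, v}"
    then have "card V \<le> card {u, v}"
      by (rule card_mono[rotated]) simp
    also have "\<dots> \<le> 2"
      by (simp add: card_insert_if)
    finally show False
      using assms(1) by simp
  qed
  then obtain x where x: "x \<in> V" "x \<notin> {u, v}"
    by blast
  \<comment> \<open>Deleting a third vertex cannot reconnect u and v.\<close>
  have "(\<lambda>a b. a \<in> V - {x} \<and> b \<in> V - {x} \<and> adj (del_vertex_edges E x) a b) \<le> ?R"
    unfolding adj_def del_vertex_edges_def by auto
  then have "\<not> (\<lambda>a b. a \<in> V - {x} \<and> b \<in> V - {x} \<and> adj (del_vertex_edges E x) a b)\<^sup>*\<^sup>* u v"
    using uv(3) rtranclp_mono by blast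
  then have "\<not> connected_graph (V - {x}) (del_vertex_edges E x)"
    using uv x unfolding connected_graph_def by blast
  then show ?thesis
    by (rule that[OF x(1)])
qed

lemma cut_vertex_split_if_not_two_connected:
  assumes "card V \<ge> 3" "\<not> two_connected V E"
  obtains x A B where "cut_vertex_split V E x A B" "A \<subset> V" "B \<subset> V"
proof -
  obtain x where x: "x \<in> V" "\<not> connected_graph (V - {x}) (del_vertex_edges E x)"
    using assms not_connected_graph_delete_vertex unfolding two_connected_def by metis
  have "V - {x} \<noteq> {}"
  proof
    assume "V - {x} = {}"
    then have "card V \<le> card {x}"
      by (intro card_mono) auto
    then show False
      using assms(1) by simp
  qed
  then obtain A B where "cut_vertex_split V E x A B" "A \<subset> V" "B \<subset> V"
    by (rule cut_vertex_split_if_cut_vertex[OF x(1) _ x(2)])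
  then show ?thesis
    by (rule that)
qed

theorem lemma1:
  fixes V :: "'v set" and E :: "'v set set"
  assumes "in_F V E"
    and "chi2 V E > 12"
    and "\<And>(V' :: 'v set) (E' :: 'v set set). in_F V' E' \<Longrightarrow> chi2 V' E' > 12 \<Longrightarrow>
           card V < card V' \<or> (card V = card V' \<and> card E \<le> card E')"
  shows "two_connected V E"
proof -
  have fin: "finite V" "finite E"
    using assms(1) simple_graph_finite_edges unfolding in_F_def simple_graph_def by auto
  have "chi2 V E \<le> card V"
    using dist2_coloring_card[OF fin(1)] dist2_colorable_iff_chi2_le[OF fin(1)] by blast
  then have "card V \<ge> 3"
    using assms(2) by linarith
  have colorable: "\<exists>c. dist2_coloring A (induced_edges E A) 12 c" if "A \<subset> V" for A
    using proper_induced_subgraph_dist2_colorable[OF assms(1) fin(1) that assms(3)] .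
  show ?thesis
  proof (rule ccontr)
    assume "\<not> two_connected V E"
    with \<open>card V \<ge> 3\<close> obtain x A B where split: "cut_vertex_split V E x A B" "A \<subset> V" "B \<subset> V"
      by (rule cut_vertex_split_if_not_two_connected)
    then have "x \<in> V"
      unfolding cut_vertex_split_def by blast
    then have "degree E x < 12"
      using assms(1) unfolding in_F_def max_degree_le_def by fastforce
    moreover obtain c1 where "dist2_coloring A (induced_edges E A) 12 c1"
      using colorable[OF split(2)] by blast
    moreover obtain c2 where "dist2_coloring B (induced_edges E B) 12 c2"
      using colorable[OF split(3)] by blast
    ultimately have "\<exists>c. dist2_coloring V E 12 c"
      by (rule dist2_coloring_glue[OF fin(2) split(1)])
    then show False
      using assms(2) dist2_colorable_iff_chi2_le[OF fin(1)] by simp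
  qed
qed

end
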